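(* Let $X$ be any object of $\mathsf{SquaMS}$, let $m\in M$ and $x,y\in X$. Then every finite path $(m,x)=z_0,z_1,\dots,z_k=(m,y)$ in $M\times X$ has score at least $\frac13 d_X(x,y)$.
   Context: Let $M_0=\{(r,s)\in[0,1]^2: r\in\{0,1\}\text{ or } s\in\{0,1\}\}$. A square metric space is a pair $(X,S_X)$ with $X$ a metric space with all distances at most $2$ and $S_X\colon M_0\to X$ injective such that (sq1) for $i\in\{0,1\}$, $r,s\in[0,1]$: $d_X(S_X(i,r),S_X(i,s))=|s-r|$ and $d_X(S_X(r,i),S_X(s,i))=|s-r|$; (sq2) $d_X(S_X(r,s),S_X(t,u))\ge|r-t|+|s-u|$; $\mathsf{SquaMS}$ is the category of these. Let $N=\{0,1,2\}^2$, $M=N\setminus\{(1,1)\}$, also viewed as points of $\mathbb{R}^2$. Let $\sim$ be the equivalence relation on $M\times X$ generated by $(m,S_X(p))\sim(n,S_X(q))$ whenever $m,n\in M$ differ by exactly $1$ in exactly one coordinate and $(m+p)/3=(n+q)/3$. On $M\times X$ let $d((a,u),(b,v))=\frac13 d_X(u,v)$ if $a=b$ and $2$ otherwise. The score of a finite path $z_0,\dots,z_k$ in $M\times X$ is $\sum_{i<k}c_i$, where $c_i=0$ if $z_i\sim z_{i+1}$ and $c_i=d(z_i,z_{i+1})$ otherwise. *)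

theory Defs
  imports Main "HOL-Library.Library" 
begin

definition M0 :: "(real \<times> real) set" where
  "M0 = {(r, s). 0 \<le> r \<and> r \<le> 1 \<and> 0 \<le> s \<and> s \<le> 1 \<and> (r \<in> {0, 1} \<or> s \<in> {0, 1})}"

text \<open>A square metric space: the metric space is the type 'a (class metric_space),
  S is the map from M0 (values of S outside M0 are irrelevant).\<close>
definition square_metric_space :: "(real \<times> real \<Rightarrow> 'a::metric_space) \<Rightarrow> bool" where
  "square_metric_space S \<longleftrightarrow>
     (\<forall>x y :: 'a. dist x y \<le> 2) \<and>
     inj_on S M0 \<and>
     (\<forall>i\<in>{0, 1}. \<forall>r\<in>{0..1}. \<forall>s\<in>{0..1}.
        dist (S (i, r)) (S (i, s)) = \<bar>s - r\<bar> \<and> dist (S (r, i)) (S (s, i)) = \<bar>s - r\<bar>) \<and>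
     (\<forall>p\<in>M0. \<forall>q\<in>M0. dist (S p) (S q) \<ge> \<bar>fst p - fst q\<bar> + \<bar>snd p - snd q\<bar>)"

definition Nset :: "(int \<times> int) set" where
  "Nset = {0, 1, 2} \<times> {0, 1, 2}"

definition Mset :: "(int \<times> int) set" where
  "Mset = Nset - {(1, 1)}"

definition adjacent :: "int \<times> int \<Rightarrow> int \<times> int \<Rightarrow> bool" where
  "adjacent m n \<longleftrightarrow>
     (\<bar>fst m - fst n\<bar> = 1 \<and> snd m = snd n) \<or> (fst m = fst n \<and> \<bar>snd m - snd n\<bar> = 1)"

definition glue_gen :: "(real \<times> real \<Rightarrow> 'a) \<Rightarrow> ((int \<times> int) \<times> 'a) rel" where
  "glue_gen S = {((m, u), (n, v)). m \<in> Mset \<and> n \<in> Mset \<and> adjacent m n \<and>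
     (\<exists>p\<in>M0. \<exists>q\<in>M0. u = S p \<and> v = S q \<and>
        (real_of_int (fst m) + fst p) / 3 = (real_of_int (fst n) + fst q) / 3 \<and>
        (real_of_int (snd m) + snd p) / 3 = (real_of_int (snd n) + snd q) / 3)}"

definition glue_equiv :: "(real \<times> real \<Rightarrow> 'a) \<Rightarrow> ((int \<times> int) \<times> 'a) rel" where
  "glue_equiv S = (glue_gen S \<union> (glue_gen S)\<inverse>)\<^sup>*"

definition dM :: "(int \<times> int) \<times> 'a::metric_space \<Rightarrow> (int \<times> int) \<times> 'a \<Rightarrow> real" where
  "dM z w = (if fst z = fst w then dist (snd z) (snd w) / 3 else 2)"

definition step_cost :: "(real \<times> real \<Rightarrow> 'a::metric_space) \<Rightarrow>
    (int \<times> int) \<times> 'a \<Rightarrow> (int \<times> int) \<times> 'a \<Rightarrow> real" where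
  "step_cost S z w = (if (z, w) \<in> glue_equiv S then 0 else dM z w)"

definition score :: "(real \<times> real \<Rightarrow> 'a::metric_space) \<Rightarrow> ((int \<times> int) \<times> 'a) list \<Rightarrow> real" where
  "score S zs = (\<Sum>i < length zs - 1. step_cost S (zs ! i) (zs ! Suc i))"

end

theory Submission
  imports Defs
begin

(* Telescoping a potential \<psi> on M \<times> X with \<psi>(m, u) = d(x, u) proves the bound, provided
  0 \<le> \<psi> \<le> 2, \<psi> is 1-Lipschitz in u on each cell, and \<psi> is constant on gluing classes:
  then \<psi>(z_(i+1)) - \<psi>(z_i) \<le> 3 c_i.  Working in the big square scaled by 3, so that cell n
  occupies n + [0,1]^2, take for n \<noteq> m the supremum of 0 and of
  d(x, S p) - |(m + p) - (n + q)|_1 - d(u, S q) over q \<in> M0 and exit points p of cell m,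
  i.e. points on a side of cell m whose outward direction does not point away from n.
  Gluing invariance uses (sq2) to move q to the glued point, (sq1) to compare points on equal
  or adjacent sides of the square, and a grid computation: if the gluing crosses to cells
  facing away from the exit side, the exit point is at l1-distance at least 2 from the glued
  point, so the candidate is at most 0 since X has diameter at most 2. *)

definition l1_dist :: "real \<times> real \<Rightarrow> real \<times> real \<Rightarrow> real" where
  "l1_dist P Q = \<bar>fst P - fst Q\<bar> + \<bar>snd P - snd Q\<bar>"

definition grid_pos :: "int \<times> int \<Rightarrow> real \<times> real \<Rightarrow> real \<times> real" where
  "grid_pos n p = (of_int (fst n) + fst p, of_int (snd n) + snd p)"

definition in_cell :: "int \<times> int \<Rightarrow> real \<times> real \<Rightarrow> bool" where
  "in_cell n P \<longleftrightarrow> of_int (fst n) \<le> fst P \<and> fst P \<le> of_int (fst n) + 1 \<and>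
     of_int (snd n) \<le> snd P \<and> snd P \<le> of_int (snd n) + 1"

definition grid_inner :: "int \<times> int \<Rightarrow> int \<times> int \<Rightarrow> int \<times> int \<Rightarrow> int" where
  "grid_inner m a b = (fst a - fst m) * (fst b - fst m) + (snd a - snd m) * (snd b - snd m)"

lemma l1_dist_commute: "l1_dist P Q = l1_dist Q P"
  unfolding l1_dist_def by (simp add: abs_minus_commute)

lemma l1_dist_nonneg: "0 \<le> l1_dist P Q"
  unfolding l1_dist_def by simp

lemma l1_dist_grid_pos_same_cell: "l1_dist (grid_pos n p) (grid_pos n q) = l1_dist p q"
  unfolding l1_dist_def grid_pos_def by simp

lemma l1_dist_triangle: "l1_dist P R \<le> l1_dist P Q + l1_dist Q R"
  unfolding l1_dist_def by linarith

lemma l1_dist_ge_cell_gap: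
  assumes "in_cell c P" and "in_cell d Q"
  shows "of_int (\<bar>fst c - fst d\<bar> + \<bar>snd c - snd d\<bar>) - 2 \<le> l1_dist P Q"
  using assms unfolding in_cell_def l1_dist_def by (auto simp: abs_if)

lemma M0_bounds: "p \<in> M0 \<Longrightarrow> fst p \<in> {0..1} \<and> snd p \<in> {0..1}"
  unfolding M0_def by auto

lemma in_cell_grid_pos: "q \<in> M0 \<Longrightarrow> in_cell n (grid_pos n q)"
  using M0_bounds[of q] unfolding in_cell_def grid_pos_def by auto

lemma side_of_grid_pos_in_cell:
  assumes "p \<in> M0" and "in_cell n (grid_pos m p)"
  shows "(fst n = fst m + 1 \<longrightarrow> fst p = 1) \<and> (fst n = fst m - 1 \<longrightarrow> fst p = 0) \<and>
    (snd n = snd m + 1 \<longrightarrow> snd p = 1) \<and> (snd n = snd m - 1 \<longrightarrow> snd p = 0)"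
  using assms M0_bounds[of p] unfolding in_cell_def grid_pos_def by auto

lemma adjacent_cases:
  assumes "adjacent m n"
  obtains "n = (fst m + 1, snd m)" | "n = (fst m - 1, snd m)"
    | "n = (fst m, snd m + 1)" | "n = (fst m, snd m - 1)"
proof -
  have "(fst n = fst m + 1 \<or> fst n = fst m - 1) \<and> snd n = snd m \<or>
    fst n = fst m \<and> (snd n = snd m + 1 \<or> snd n = snd m - 1)"
    using assms unfolding adjacent_def by arith
  then show thesis
    using that by (cases m, cases n) auto
qed

lemma adjacent_sym: "adjacent a b \<Longrightarrow> adjacent b a"
  unfolding adjacent_def by auto

lemma adjacent_neq: "adjacent a b \<Longrightarrow> a \<noteq> b"
  unfolding adjacent_def by auto

lemma Mset_iff: "(i, j) \<in> Mset \<longleftrightarrow> 0 \<le> i \<and> i \<le> 2 \<and> 0 \<le> j \<and> j \<le> 2 \<and> \<not> (i = 1 \<and> j = 1)"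
proof -
  have "k \<in> {0, 1, 2} \<longleftrightarrow> 0 \<le> k \<and> k \<le> 2" for k :: int
    unfolding insert_iff empty_iff by arith
  then show ?thesis
    unfolding Mset_def Nset_def Diff_iff mem_Sigma_iff by simp
qed

text \<open>Necessarily \<open>b = a - (n0 - m)\<close>, and \<open>a\<close> lies two cells from \<open>m\<close> orthogonally to
  \<open>n0 - m\<close>: at distance one, \<open>a\<close> would be the hole \<open>(1, 1)\<close>.\<close>

lemma crossing_edge_far_from_exit_cell:
  assumes "m \<in> Mset" "n0 \<in> Mset" "a \<in> Mset" "b \<in> Mset"
    and "adjacent m n0" "adjacent a b" "a \<noteq> m"
    and "0 \<le> grid_inner m a n0" "grid_inner m b n0 < 0"
  shows "4 \<le> \<bar>fst n0 - fst b\<bar> + \<bar>snd n0 - snd b\<bar>"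
proof -
  obtain m1 m2 a1 a2 where ma: "m = (m1, m2)" "a = (a1, a2)"
    by (cases m, cases a)
  from assms(5,6) show ?thesis
    using assms(1-4,7-9) unfolding ma
    by (elim adjacent_cases) (simp_all add: Mset_iff grid_inner_def, arith+)
qed

lemma sms_dist_le_2:
  fixes S :: "real \<times> real \<Rightarrow> 'a::metric_space" and a b :: 'a
  shows "square_metric_space S \<Longrightarrow> dist a b \<le> 2"
  unfolding square_metric_space_def by blast

lemma sms_l1_dist_le_dist:
  "square_metric_space S \<Longrightarrow> p \<in> M0 \<Longrightarrow> q \<in> M0 \<Longrightarrow> l1_dist p q \<le> dist (S p) (S q)"
  unfolding square_metric_space_def l1_dist_def by blast

lemma sms_vertical_side:
  "square_metric_space S \<Longrightarrow> i \<in> {0, 1} \<Longrightarrow> r \<in> {0..1} \<Longrightarrow> s \<in> {0..1} \<Longrightarrow>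
    dist (S (i, r)) (S (i, s)) = \<bar>s - r\<bar>"
  unfolding square_metric_space_def by blast

lemma sms_horizontal_side:
  "square_metric_space S \<Longrightarrow> i \<in> {0, 1} \<Longrightarrow> r \<in> {0..1} \<Longrightarrow> s \<in> {0..1} \<Longrightarrow>
    dist (S (r, i)) (S (s, i)) = \<bar>s - r\<bar>"
  unfolding square_metric_space_def by blast

lemma sms_dist_le_l1_dist_same_side:
  assumes S: "square_metric_space S" and p: "p \<in> M0" and q: "q \<in> M0"
    and side: "(fst p \<in> {0, 1} \<and> fst q = fst p) \<or> (snd p \<in> {0, 1} \<and> snd q = snd p)"
  shows "dist (S p) (S q) \<le> l1_dist p q"
proof -
  obtain a b c d where pq: "p = (a, b)" "q = (c, d)"
    by (cases p, cases q)
  show ?thesis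
    using side sms_vertical_side[OF S, of a b d] sms_horizontal_side[OF S, of b a c]
      M0_bounds[OF p] M0_bounds[OF q]
    unfolding pq l1_dist_def by auto
qed

lemma sms_dist_le_l1_dist_adjacent_sides:
  assumes S: "square_metric_space S" and p: "p \<in> M0" and q: "q \<in> M0"
    and "fst p \<in> {0, 1}" and "snd q \<in> {0, 1}"
  shows "dist (S p) (S q) \<le> l1_dist p q"
proof -
  obtain a b c d where pq: "p = (a, b)" "q = (c, d)"
    by (cases p, cases q)
  have "dist (S (a, b)) (S (c, d)) \<le> dist (S (a, b)) (S (a, d)) + dist (S (a, d)) (S (c, d))"
    by (rule dist_triangle)
  also have "\<dots> = \<bar>d - b\<bar> + \<bar>c - a\<bar>"
    using assms(4,5) sms_vertical_side[OF S, of a b d] sms_horizontal_side[OF S, of d a c]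
      M0_bounds[OF p] M0_bounds[OF q]
    unfolding pq by simp
  finally show ?thesis
    unfolding pq l1_dist_def by (simp add: abs_minus_commute)
qed

lemma sms_dist_le_l1_dist_nonopposite_sides:
  assumes S: "square_metric_space S" and "adjacent m n" "adjacent m n'" "0 \<le> grid_inner m n n'"
    and p: "p \<in> M0" and p': "p' \<in> M0"
    and "in_cell n (grid_pos m p)" "in_cell n' (grid_pos m p')"
  shows "dist (S p) (S p') \<le> l1_dist p p'"
proof -
  note sides = side_of_grid_pos_in_cell[OF p assms(7)] side_of_grid_pos_in_cell[OF p' assms(8)]
  from assms(2,3) show ?thesis
    using assms(4) sides sms_dist_le_l1_dist_same_side[OF S p p']
      sms_dist_le_l1_dist_adjacent_sides[OF S p p'] sms_dist_le_l1_dist_adjacent_sides[OF S p' p]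
    by (elim adjacent_cases) (auto simp: grid_inner_def dist_commute l1_dist_commute)
qed

section \<open>A potential for the score\<close>

definition exit_point :: "int \<times> int \<Rightarrow> int \<times> int \<Rightarrow> real \<times> real \<Rightarrow> bool" where
  "exit_point m n p \<longleftrightarrow> p \<in> M0 \<and>
     (\<exists>n0\<in>Mset. adjacent m n0 \<and> 0 \<le> grid_inner m n n0 \<and> in_cell n0 (grid_pos m p))"

definition potential :: "(real \<times> real \<Rightarrow> 'a::metric_space) \<Rightarrow> int \<times> int \<Rightarrow> 'a \<Rightarrow> (int \<times> int) \<times> 'a \<Rightarrow> real"
  where
  "potential S m x z = (if fst z = m then dist x (snd z) else
     Sup (insert 0 {dist x (S p) - l1_dist (grid_pos m p) (grid_pos (fst z) q) - dist (snd z) (S q)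
       | p q. exit_point m (fst z) p \<and> q \<in> M0}))"

lemma potential_home: "potential S m x (m, u) = dist x u"
  unfolding potential_def by simp

lemma potential_le_iff:
  assumes S: "square_metric_space S" and "n \<noteq> m"
  shows "potential S m x (n, u) \<le> t \<longleftrightarrow> 0 \<le> t \<and> (\<forall>p q. exit_point m n p \<longrightarrow> q \<in> M0 \<longrightarrow>
    dist x (S p) - l1_dist (grid_pos m p) (grid_pos n q) - dist u (S q) \<le> t)"
proof -
  let ?C = "{dist x (S p) - l1_dist (grid_pos m p) (grid_pos n q) - dist u (S q)
    | p q. exit_point m n p \<and> q \<in> M0}"
  have "c \<le> 2" if "c \<in> ?C" for c
  proof -
    from that obtain p q
      where "c = dist x (S p) - l1_dist (grid_pos m p) (grid_pos n q) - dist u (S q)"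
      by blast
    then show ?thesis
      using sms_dist_le_2[OF S, of x "S p"] l1_dist_nonneg[of "grid_pos m p" "grid_pos n q"]
        zero_le_dist[of u "S q"] by linarith
  qed
  then have "bdd_above (insert 0 ?C)"
    unfolding bdd_above_insert by (rule bdd_aboveI)
  moreover have "potential S m x (n, u) = Sup (insert 0 ?C)"
    using \<open>n \<noteq> m\<close> by (simp add: potential_def)
  ultimately show ?thesis
    by (simp add: cSup_le_iff) blast
qed

lemma potential_nonneg:
  assumes "square_metric_space S"
  shows "0 \<le> potential S m x (n, u)"
proof (cases "n = m")
  case False
  then show ?thesis
    using potential_le_iff[OF assms False, of x u "potential S m x (n, u)"] by simp
qed (simp add: potential_home)

lemma potential_ge_candidate:
  assumes "square_metric_space S" and "n \<noteq> m" and "exit_point m n p" and "q \<in> M0"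
  shows "dist x (S p) - l1_dist (grid_pos m p) (grid_pos n q) - dist u (S q) \<le> potential S m x (n, u)"
  using potential_le_iff[OF assms(1,2)] assms(3,4) by blast

lemma potential_le_2:
  assumes S: "square_metric_space S"
  shows "potential S m x (n, u) \<le> 2"
proof (cases "n = m")
  case True
  then show ?thesis
    using sms_dist_le_2[OF S] by (simp add: potential_home)
next
  case False
  show ?thesis
  proof (subst potential_le_iff[OF S False], intro conjI allI impI)
    fix p q
    show "dist x (S p) - l1_dist (grid_pos m p) (grid_pos n q) - dist u (S q) \<le> 2"
      using sms_dist_le_2[OF S, of x "S p"] l1_dist_nonneg[of "grid_pos m p" "grid_pos n q"]
        zero_le_dist[of u "S q"] by linarith
  qed simp
qed

lemma potential_lipschitz:
  assumes S: "square_metric_space S"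
  shows "potential S m x (n, v) \<le> potential S m x (n, u) + dist u v"
proof (cases "n = m")
  case True
  then show ?thesis
    using dist_triangle[of x v u] by (simp add: potential_home dist_commute)
next
  case False
  show ?thesis
  proof (subst potential_le_iff[OF S False], intro conjI allI impI)
    show "0 \<le> potential S m x (n, u) + dist u v"
      using potential_nonneg[OF S] by (simp add: add_nonneg_nonneg)
    fix p q assume "exit_point m n p" "q \<in> M0"
    then have "dist x (S p) - l1_dist (grid_pos m p) (grid_pos n q) - dist u (S q) \<le> potential S m x (n, u)"
      by (rule potential_ge_candidate[OF S False])
    then show "dist x (S p) - l1_dist (grid_pos m p) (grid_pos n q) - dist v (S q) \<le>
        potential S m x (n, u) + dist u v"
      using dist_triangle[of u "S q" v] by linarith
  qed
qed

text \<open>At a point of the image of \<open>S\<close>, (sq2) lets every candidate be moved to \<open>q = q0\<close>.\<close>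

lemma potential_at_side_le:
  assumes S: "square_metric_space S" and "n \<noteq> m" and q0: "q0 \<in> M0" and "0 \<le> t"
    and bound: "\<And>p. exit_point m n p \<Longrightarrow> dist x (S p) - l1_dist (grid_pos m p) (grid_pos n q0) \<le> t"
  shows "potential S m x (n, S q0) \<le> t"
proof (subst potential_le_iff[OF S \<open>n \<noteq> m\<close>], intro conjI allI impI)
  fix p q assume "exit_point m n p" "q \<in> M0"
  have "l1_dist (grid_pos m p) (grid_pos n q0) \<le> l1_dist (grid_pos m p) (grid_pos n q) + l1_dist q0 q"
    using l1_dist_triangle[of "grid_pos m p" "grid_pos n q0" "grid_pos n q"] l1_dist_commute[of q q0]
    by (simp add: l1_dist_grid_pos_same_cell)
  also have "\<dots> \<le> l1_dist (grid_pos m p) (grid_pos n q) + dist (S q0) (S q)"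
    using sms_l1_dist_le_dist[OF S q0 \<open>q \<in> M0\<close>] by simp
  finally show "dist x (S p) - l1_dist (grid_pos m p) (grid_pos n q) - dist (S q0) (S q) \<le> t"
    using bound[OF \<open>exit_point m n p\<close>] by linarith
qed (use \<open>0 \<le> t\<close> in simp)

lemma potential_glue_from_home:
  assumes S: "square_metric_space S" and b: "b \<in> Mset" and "adjacent m b"
    and p: "p \<in> M0" and q: "q \<in> M0" and pos: "grid_pos m p = grid_pos b q"
  shows "potential S m x (m, S p) \<le> potential S m x (b, S q)"
proof -
  have "b \<noteq> m"
    using adjacent_neq[OF \<open>adjacent m b\<close>] by simp
  have "in_cell b (grid_pos m p)"
    using pos in_cell_grid_pos[OF q] by simp
  then have "exit_point m b p"
    unfolding exit_point_def grid_inner_def using p b \<open>adjacent m b\<close> by auto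
  from potential_ge_candidate[OF S \<open>b \<noteq> m\<close> this q, of x "S q"] show ?thesis
    using pos by (simp add: potential_home l1_dist_def)
qed

lemma potential_glue_to_home:
  assumes S: "square_metric_space S" and "adjacent a m"
    and p: "p \<in> M0" and q: "q \<in> M0" and pos: "grid_pos a p = grid_pos m q"
  shows "potential S m x (a, S p) \<le> potential S m x (m, S q)"
proof (rule potential_at_side_le[OF S _ p])
  show "a \<noteq> m"
    using adjacent_neq[OF \<open>adjacent a m\<close>] .
  show "0 \<le> potential S m x (m, S q)"
    by (rule potential_nonneg[OF S])
  fix p' assume "exit_point m a p'"
  then obtain n0 where p': "p' \<in> M0" and "adjacent m n0" "0 \<le> grid_inner m a n0"
    and "in_cell n0 (grid_pos m p')"
    unfolding exit_point_def by blast
  moreover have "in_cell a (grid_pos m q)"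
    using pos in_cell_grid_pos[OF p, of a] by simp
  ultimately have "dist (S p') (S q) \<le> l1_dist p' q"
    using sms_dist_le_l1_dist_nonopposite_sides[OF S _ adjacent_sym[OF \<open>adjacent a m\<close>] _ p' q]
    by (simp add: grid_inner_def mult.commute)
  moreover have "l1_dist (grid_pos m p') (grid_pos a p) = l1_dist p' q"
    using pos by (simp add: l1_dist_grid_pos_same_cell)
  moreover have "dist x (S p') \<le> dist x (S q) + dist (S q) (S p')"
    by (rule dist_triangle)
  ultimately show "dist x (S p') - l1_dist (grid_pos m p') (grid_pos a p) \<le> potential S m x (m, S q)"
    by (simp add: potential_home dist_commute)
qed

lemma potential_glue_away_from_home:
  assumes S: "square_metric_space S" and m: "m \<in> Mset" and a: "a \<in> Mset" and b: "b \<in> Mset"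
    and "adjacent a b" and "a \<noteq> m" and "b \<noteq> m"
    and p: "p \<in> M0" and q: "q \<in> M0" and pos: "grid_pos a p = grid_pos b q"
  shows "potential S m x (a, S p) \<le> potential S m x (b, S q)"
proof (rule potential_at_side_le[OF S \<open>a \<noteq> m\<close> p])
  show "0 \<le> potential S m x (b, S q)"
    by (rule potential_nonneg[OF S])
  fix p' assume "exit_point m a p'"
  then obtain n0 where n0: "n0 \<in> Mset" "adjacent m n0" "0 \<le> grid_inner m a n0"
    and p': "p' \<in> M0" and exit: "in_cell n0 (grid_pos m p')"
    unfolding exit_point_def by blast
  show "dist x (S p') - l1_dist (grid_pos m p') (grid_pos a p) \<le> potential S m x (b, S q)"
  proof (cases "0 \<le> grid_inner m b n0")
    case True
    then have "exit_point m b p'"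
      unfolding exit_point_def using n0 p' exit by blast
    from potential_ge_candidate[OF S \<open>b \<noteq> m\<close> this q, of x "S q"] show ?thesis
      using pos by simp
  next
    case False
    have "4 \<le> \<bar>fst n0 - fst b\<bar> + \<bar>snd n0 - snd b\<bar>"
      using crossing_edge_far_from_exit_cell[OF m n0(1) a b n0(2) \<open>adjacent a b\<close> \<open>a \<noteq> m\<close> n0(3)] False
      by simp
    moreover have "in_cell b (grid_pos a p)"
      using pos in_cell_grid_pos[OF q] by simp
    ultimately have "2 \<le> l1_dist (grid_pos m p') (grid_pos a p)"
      using l1_dist_ge_cell_gap[OF exit, of b "grid_pos a p"] by linarith
    then show ?thesis
      using sms_dist_le_2[OF S, of x "S p'"] potential_nonneg[OF S, of m x b "S q"] by linarith
  qed
qed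

lemma potential_glue_le:
  assumes S: "square_metric_space S" and m: "m \<in> Mset" and a: "a \<in> Mset" and b: "b \<in> Mset"
    and "adjacent a b" and p: "p \<in> M0" and q: "q \<in> M0" and pos: "grid_pos a p = grid_pos b q"
  shows "potential S m x (a, S p) \<le> potential S m x (b, S q)"
proof -
  consider "a = m" | "b = m" | "a \<noteq> m" "b \<noteq> m"
    by blast
  then show ?thesis
  proof cases
    case 1
    then show ?thesis
      using potential_glue_from_home[OF S b _ p q] \<open>adjacent a b\<close> pos by simp
  next
    case 2
    then show ?thesis
      using potential_glue_to_home[OF S _ p q] \<open>adjacent a b\<close> pos by simp
  next
    case 3
    then show ?thesis
      using potential_glue_away_from_home[OF S m a b \<open>adjacent a b\<close> _ _ p q pos] by simp
  qed
qed

lemma potential_glue_gen: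
  assumes S: "square_metric_space S" and m: "m \<in> Mset" and "(z, w) \<in> glue_gen S"
  shows "potential S m x z = potential S m x w"
proof -
  from \<open>(z, w) \<in> glue_gen S\<close> obtain a b p q
    where zw: "z = (a, S p)" "w = (b, S q)" and a: "a \<in> Mset" and b: "b \<in> Mset"
      and "adjacent a b" and p: "p \<in> M0" and q: "q \<in> M0" and pos: "grid_pos a p = grid_pos b q"
    unfolding glue_gen_def grid_pos_def by auto
  show ?thesis
    using potential_glue_le[OF S m a b \<open>adjacent a b\<close> p q pos, where x = x]
      potential_glue_le[OF S m b a adjacent_sym[OF \<open>adjacent a b\<close>] q p pos[symmetric], where x = x]
    unfolding zw by simp
qed

lemma potential_glue_equiv:
  assumes S: "square_metric_space S" and m: "m \<in> Mset" and "(z, w) \<in> glue_equiv S"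
  shows "potential S m x z = potential S m x w"
  using \<open>(z, w) \<in> glue_equiv S\<close> unfolding glue_equiv_def
proof (induction rule: rtrancl_induct)
  case (step v w)
  then show ?case
    using potential_glue_gen[OF S m, of v w x] potential_glue_gen[OF S m, of w v x] by auto
qed simp

lemma potential_step_le:
  assumes S: "square_metric_space S" and m: "m \<in> Mset"
  shows "potential S m x w - potential S m x z \<le> 3 * step_cost S z w"
proof (cases "(z, w) \<in> glue_equiv S")
  case True
  then show ?thesis
    using potential_glue_equiv[OF S m True] by (simp add: step_cost_def)
next
  case False
  obtain n u n' v where zw: "z = (n, u)" "w = (n', v)"
    by (cases z, cases w)
  show ?thesis
  proof (cases "n = n'")
    case True
    then show ?thesis
      using False potential_lipschitz[OF S, of m x n v u] unfolding zw by (simp add: step_cost_def dM_def)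
  next
    case False
    then show ?thesis
      using \<open>(z, w) \<notin> glue_equiv S\<close> potential_le_2[OF S, of m x n' v] potential_nonneg[OF S, of m x n u]
      unfolding zw by (simp add: step_cost_def dM_def)
  qed
qed

theorem mainTheorem12:
  fixes S :: "real \<times> real \<Rightarrow> 'a::metric_space"
    and m :: "int \<times> int" and x y :: 'a
    and zs :: "((int \<times> int) \<times> 'a) list"
  assumes "square_metric_space S"
    and "m \<in> Mset"
    and "zs \<noteq> []"
    and "set zs \<subseteq> Mset \<times> UNIV"
    and "hd zs = (m, x)"
    and "last zs = (m, y)"
  shows "score S zs \<ge> dist x y / 3"
proof -
  let ?\<psi> = "\<lambda>i. potential S m x (zs ! i)"
  have "dist x y = ?\<psi> (length zs - 1) - ?\<psi> 0"
    using assms(3,5,6) by (simp add: hd_conv_nth last_conv_nth potential_home)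
  also have "\<dots> = (\<Sum>i < length zs - 1. ?\<psi> (Suc i) - ?\<psi> i)"
    by (rule sum_lessThan_telescope[symmetric])
  also have "\<dots> \<le> (\<Sum>i < length zs - 1. 3 * step_cost S (zs ! i) (zs ! Suc i))"
    by (rule sum_mono) (rule potential_step_le[OF assms(1,2)])
  also have "\<dots> = 3 * score S zs"
    by (simp add: score_def sum_distrib_left)
  finally show ?thesis
    by simp
qed

end
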